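(* Let $S[1..n]$ be a string over $\Sigma=\{1,\ldots,\sigma\}$, and suppose its rank array and lcp array are given. Then for any position interval $[x..y]$ with $1\le x\le y\le n$, one can find $\mathrm{LR}_x^y$ or determine that it does not exist using $O(x)$ time and $O(n)$ space. If there are multiple choices for $\mathrm{LR}_x^y$, the leftmost one is returned.
   Context: For $1\le i\le j\le n$, $S[i..j]=S[i]\cdots S[j]$. A substring $S[i..j]$ covers $[x..y]$ if $i\le x\le y\le j$. A substring is unique if it has no other occurrence starting at a different position; it is a repeat otherwise. $\mathrm{LR}_x^y$ is a repeat $S[i..j]$ covering $[x..y]$ such that no repeat $S[i'..j']$ covering $[x..y]$ has $j'-i'>j-i$. The suffix array $SA[1..n]$ is the permutation of $\{1,\ldots,n\}$ such that $S[SA[1]..n]<S[SA[2]..n]<\cdots$ in lexicographic order (a proper prefix is smaller). The rank array is its inverse: $\mathrm{Rank}[i]=j$ iff $SA[j]=i$. The lcp array $\mathrm{LCP}[1..n+1]$ has $\mathrm{LCP}[1]=\mathrm{LCP}[n+1]=0$ and, for $2\le i\le n$, $\mathrm{LCP}[i]$ is the length of the longest common prefix of $S[SA[i-1]..n]$ and $S[SA[i]..n]$. Complexity is in the word-RAM model with each integer in $\{0,\ldots,n+1\}$ occupying a constant number of words. *)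

theory Defs
  imports Main
begin

text \<open>A string S[1..n] is a list of length n; position i (1-based) is S ! (i - 1).\<close>

definition substr :: "nat list \<Rightarrow> nat \<Rightarrow> nat \<Rightarrow> nat list" where
  "substr S i j = take (Suc j - i) (drop (i - 1) S)"

definition suffix_at :: "nat list \<Rightarrow> nat \<Rightarrow> nat list" where
  "suffix_at S i = drop (i - 1) S"

definition occurs_at :: "nat list \<Rightarrow> nat list \<Rightarrow> nat \<Rightarrow> bool" where
  "occurs_at S w p \<longleftrightarrow> 1 \<le> p \<and> p + length w \<le> Suc (length S) \<and> take (length w) (drop (p - 1) S) = w"

definition is_repeat :: "nat list \<Rightarrow> nat \<Rightarrow> nat \<Rightarrow> bool" where
  "is_repeat S i j \<longleftrightarrow> 1 \<le> i \<and> i \<le> j \<and> j \<le> length S \<and>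
     (\<exists>p. p \<noteq> i \<and> occurs_at S (substr S i j) p)"

definition covers :: "nat \<Rightarrow> nat \<Rightarrow> nat \<Rightarrow> nat \<Rightarrow> bool" where
  "covers i j x y \<longleftrightarrow> i \<le> x \<and> x \<le> y \<and> y \<le> j"

definition is_LR :: "nat list \<Rightarrow> nat \<Rightarrow> nat \<Rightarrow> nat \<Rightarrow> nat \<Rightarrow> bool" where
  "is_LR S x y i j \<longleftrightarrow> is_repeat S i j \<and> covers i j x y \<and>
     (\<forall>i' j'. is_repeat S i' j' \<and> covers i' j' x y \<longrightarrow> j' - i' \<le> j - i)"

definition is_leftmost_LR :: "nat list \<Rightarrow> nat \<Rightarrow> nat \<Rightarrow> nat \<Rightarrow> nat \<Rightarrow> bool" where
  "is_leftmost_LR S x y i j \<longleftrightarrow> is_LR S x y i j \<and> (\<forall>i' j'. is_LR S x y i' j' \<longrightarrow> i \<le> i')"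

text \<open>Lexicographic order in which a proper prefix is smaller (Main's lexord).\<close>
definition lex_less :: "nat list \<Rightarrow> nat list \<Rightarrow> bool" where
  "lex_less u v \<longleftrightarrow> (u, v) \<in> lexord {(a, b). a < b}"

definition is_SA :: "nat list \<Rightarrow> (nat \<Rightarrow> nat) \<Rightarrow> bool" where
  "is_SA S SA \<longleftrightarrow> bij_betw SA {1..length S} {1..length S} \<and>
     (\<forall>a b. 1 \<le> a \<and> a < b \<and> b \<le> length S \<longrightarrow>
        lex_less (suffix_at S (SA a)) (suffix_at S (SA b)))"

definition is_rank_array :: "nat list \<Rightarrow> (nat \<Rightarrow> nat) \<Rightarrow> (nat \<Rightarrow> nat) \<Rightarrow> bool" where
  "is_rank_array S SA Rank \<longleftrightarrow>
     (\<forall>i\<in>{1..length S}. \<forall>j\<in>{1..length S}. Rank i = j \<longleftrightarrow> SA j = i)"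

fun lcp :: "nat list \<Rightarrow> nat list \<Rightarrow> nat" where
  "lcp (a # u) (b # v) = (if a = b then Suc (lcp u v) else 0)"
| "lcp _ _ = 0"

definition is_lcp_array :: "nat list \<Rightarrow> (nat \<Rightarrow> nat) \<Rightarrow> (nat \<Rightarrow> nat) \<Rightarrow> bool" where
  "is_lcp_array S SA L \<longleftrightarrow> L 1 = 0 \<and> L (Suc (length S)) = 0 \<and>
     (\<forall>i\<in>{2..length S}. L i = lcp (suffix_at S (SA (i - 1))) (suffix_at S (SA i)))"

text \<open>
  Programs operate on finitely many registers (indices are constants of the program text),
  a zero-initialised working memory (nat \<Rightarrow> nat), and three read-only input arrays
  S[1..n], Rank[1..n], LCP[1..n+1].
  Every value written to a register or memory cell must be smaller than the word bound W
  (W = (n + sigma + 2)^k for a program-specific constant k, i.e. words of O(log n) bits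
  for polynomially bounded alphabets); otherwise, and on out-of-range input reads, the
  machine faults.
\<close>

datatype aop = Plus | Minus | Times | Divide | Modulo | Less | Eq

datatype instr =
    LoadConst nat nat
  | Arith aop nat nat nat
  | ReadS nat nat
  | ReadRank nat nat
  | ReadLCP nat nat
  | Load nat nat
  | Store nat nat
  | JumpIfZero nat nat
  | Jump nat
  | Halt

record cfg =
  pc :: nat
  regs :: "nat \<Rightarrow> nat"
  mem :: "nat \<Rightarrow> nat"
  space :: nat

datatype status = Running cfg | Done cfg | Fault

record env =
  len :: nat
  wbound :: nat
  sArr :: "nat \<Rightarrow> nat"
  rankArr :: "nat \<Rightarrow> nat"
  lcpArr :: "nat \<Rightarrow> nat"

fun eval_aop :: "aop \<Rightarrow> nat \<Rightarrow> nat \<Rightarrow> nat" where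
  "eval_aop Plus a b = a + b"
| "eval_aop Minus a b = a - b"
| "eval_aop Times a b = a * b"
| "eval_aop Divide a b = a div b"
| "eval_aop Modulo a b = a mod b"
| "eval_aop Less a b = (if a < b then 1 else 0)"
| "eval_aop Eq a b = (if a = b then 1 else 0)"

definition setreg :: "env \<Rightarrow> cfg \<Rightarrow> nat \<Rightarrow> nat \<Rightarrow> status" where
  "setreg E c r v = (if v < wbound E
      then Running (c\<lparr>pc := Suc (pc c), regs := (regs c)(r := v)\<rparr>) else Fault)"

definition readarr :: "env \<Rightarrow> cfg \<Rightarrow> (nat \<Rightarrow> nat) \<Rightarrow> nat \<Rightarrow> nat \<Rightarrow> nat \<Rightarrow> status" where
  "readarr E c A hi r a = (let i = regs c a in
      if 1 \<le> i \<and> i \<le> hi then setreg E c r (A i) else Fault)"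

fun exec_instr :: "env \<Rightarrow> cfg \<Rightarrow> instr \<Rightarrow> status" where
  "exec_instr E c (LoadConst r v) = setreg E c r v"
| "exec_instr E c (Arith f r a b) = setreg E c r (eval_aop f (regs c a) (regs c b))"
| "exec_instr E c (ReadS r a) = readarr E c (sArr E) (len E) r a"
| "exec_instr E c (ReadRank r a) = readarr E c (rankArr E) (len E) r a"
| "exec_instr E c (ReadLCP r a) = readarr E c (lcpArr E) (Suc (len E)) r a"
| "exec_instr E c (Load r a) =
     setreg E (c\<lparr>space := max (space c) (Suc (regs c a))\<rparr>) r (mem c (regs c a))"
| "exec_instr E c (Store a b) =
     Running (c\<lparr>pc := Suc (pc c), mem := (mem c)(regs c a := regs c b),
                space := max (space c) (Suc (regs c a))\<rparr>)"
| "exec_instr E c (JumpIfZero r l) =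
     Running (c\<lparr>pc := (if regs c r = 0 then l else Suc (pc c))\<rparr>)"
| "exec_instr E c (Jump l) = Running (c\<lparr>pc := l\<rparr>)"
| "exec_instr E c Halt = Done c"

definition step :: "instr list \<Rightarrow> env \<Rightarrow> cfg \<Rightarrow> status" where
  "step P E c = (if pc c < length P then exec_instr E c (P ! pc c) else Fault)"

fun run :: "instr list \<Rightarrow> env \<Rightarrow> nat \<Rightarrow> status \<Rightarrow> status" where
  "run P E 0 s = s"
| "run P E (Suc t) s = (case s of Running c \<Rightarrow> run P E t (step P E c) | _ \<Rightarrow> s)"

definition init_cfg :: "nat \<Rightarrow> nat \<Rightarrow> nat \<Rightarrow> cfg" where
  "init_cfg n x y = \<lparr>pc = 0, regs = (\<lambda>r. if r = 0 then n else if r = 1 then x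
                                          else if r = 2 then y else 0),
                     mem = (\<lambda>_. 0), space = 0\<rparr>"

definition result_of :: "cfg \<Rightarrow> (nat \<times> nat) option" where
  "result_of c = (if regs c 0 = 0 then None else Some (regs c 0, regs c 1))"

definition mk_env :: "nat list \<Rightarrow> nat \<Rightarrow> nat \<Rightarrow> (nat \<Rightarrow> nat) \<Rightarrow> (nat \<Rightarrow> nat) \<Rightarrow> env" where
  "mk_env S \<sigma> k Rank L = \<lparr>len = length S, wbound = (length S + \<sigma> + 2) ^ k,
                           sArr = (\<lambda>i. S ! (i - 1)), rankArr = Rank, lcpArr = L\<rparr>"

definition correct_answer :: "nat list \<Rightarrow> nat \<Rightarrow> nat \<Rightarrow> (nat \<times> nat) option \<Rightarrow> bool" where
  "correct_answer S x y out \<longleftrightarrow>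
     (case out of None \<Rightarrow> \<not> (\<exists>i j. is_LR S x y i j)
                | Some (i, j) \<Rightarrow> is_leftmost_LR S x y i j)"

end

theory Submission
  imports Defs
begin

text \<open>
  A repeat S[i..j] is a prefix of the suffix starting at i that also starts elsewhere, so it
  exists iff j - i + 1 is at most the longest common prefix of suffix i with another suffix.
  By the sortedness of the suffix array, that longest lcp is attained at a lexicographic
  neighbour of suffix i, i.e. it equals max (LCP[Rank i]) (LCP[Rank i + 1]).  Hence a repeat
  starting at i covers [x..y] iff i \<le> x and y < i + that maximum, and a single left-to-right
  scan of i = 1..x, keeping the first strict maximum, yields the leftmost LR.  The scan costs
  a constant number of word-RAM instructions per position and no working memory.
\<close>

lemma lcp_le_length: "lcp u v \<le> length u" "lcp u v \<le> length v"
  by (induction u v rule: lcp.induct) auto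

lemma lcp_commute: "lcp u v = lcp v u"
  by (induction u v rule: lcp.induct) auto

lemma le_lcp_iff: "m \<le> lcp u v \<longleftrightarrow> m \<le> length u \<and> m \<le> length v \<and> take m u = take m v"
proof (induction u v arbitrary: m rule: lcp.induct)
  case (1 a u b v)
  then show ?case by (cases m) auto
qed auto

lemma lcp_lexord_le:
  assumes "(u, v) \<in> lexord {(a, b). (a::nat) < b}" "(v, w) \<in> lexord {(a, b). a < b}"
  shows "lcp u w \<le> lcp u v \<and> lcp u w \<le> lcp v w"
  using assms
proof (induction u arbitrary: v w)
  case (Cons a u)
  obtain b v' c w' where vw: "v = b # v'" "w = c # w'"
    using Cons.prems by (cases v; cases w) auto
  show ?case
  proof (cases "a = c")
    case True
    then have "a = b" "b = c" using Cons.prems vw by (auto simp: lexord_cons_cons)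
    then show ?thesis using Cons vw True by (auto simp: lexord_cons_cons)
  qed (simp add: vw)
qed simp

lemma length_suffix_at: "length (suffix_at S i) = length S - (i - 1)"
  by (simp add: suffix_at_def)

definition max_lcp :: "(nat \<Rightarrow> nat) \<Rightarrow> (nat \<Rightarrow> nat) \<Rightarrow> nat \<Rightarrow> nat" where
  "max_lcp Rank L i = max (L (Rank i)) (L (Suc (Rank i)))"

locale suffix_array_data =
  fixes S :: "nat list" and SA Rank L :: "nat \<Rightarrow> nat"
  assumes SA: "is_SA S SA" and Rank: "is_rank_array S SA Rank" and LCP: "is_lcp_array S SA L"
begin

lemma SA_in_range: "r \<in> {1..length S} \<Longrightarrow> SA r \<in> {1..length S}"
  using SA unfolding is_SA_def bij_betw_def by auto

lemma inj_on_SA: "inj_on SA {1..length S}"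
  using SA unfolding is_SA_def bij_betw_def by auto

lemma Rank_in_range: "i \<in> {1..length S} \<Longrightarrow> Rank i \<in> {1..length S}"
  and SA_Rank: "i \<in> {1..length S} \<Longrightarrow> SA (Rank i) = i"
proof -
  assume i: "i \<in> {1..length S}"
  then obtain j where j: "j \<in> {1..length S}" "SA j = i"
    using SA unfolding is_SA_def bij_betw_def by (metis imageE)
  then have "Rank i = j" using Rank i unfolding is_rank_array_def by blast
  then show "Rank i \<in> {1..length S}" "SA (Rank i) = i" using j by simp_all
qed

lemma LCP_boundary: "L 1 = 0" "L (Suc (length S)) = 0"
  using LCP unfolding is_lcp_array_def by auto

lemma LCP_eq: "r \<in> {2..length S} \<Longrightarrow> L r = lcp (suffix_at S (SA (r - 1))) (suffix_at S (SA r))"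
  using LCP unfolding is_lcp_array_def by blast

lemma lcp_suffixes_le_LCP:
  assumes "1 \<le> r" "r < r'" "r' \<le> length S"
  shows "lcp (suffix_at S (SA r)) (suffix_at S (SA r')) \<le> L r'"
    and "lcp (suffix_at S (SA r)) (suffix_at S (SA r')) \<le> L (Suc r)"
proof -
  have sorted: "(suffix_at S (SA a), suffix_at S (SA b)) \<in> lexord {(a, b). a < b}"
    if "1 \<le> a" "a < b" "b \<le> length S" for a b
    using SA that unfolding is_SA_def lex_less_def by blast
  show "lcp (suffix_at S (SA r)) (suffix_at S (SA r')) \<le> L r'"
  proof (cases "r = r' - 1")
    case False
    then show ?thesis
      using LCP_eq[of r'] lcp_lexord_le[OF sorted[of r "r' - 1"] sorted[of "r' - 1" r']] assms by auto
  qed (use LCP_eq[of r'] assms in auto)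
  show "lcp (suffix_at S (SA r)) (suffix_at S (SA r')) \<le> L (Suc r)"
  proof (cases "Suc r = r'")
    case False
    then show ?thesis
      using LCP_eq[of "Suc r"] lcp_lexord_le[OF sorted[of r "Suc r"] sorted[of "Suc r" r']] assms by auto
  qed (use LCP_eq[of r'] assms in auto)
qed

lemma lcp_le_max_lcp:
  assumes "i \<in> {1..length S}" "p \<in> {1..length S}" "p \<noteq> i"
  shows "lcp (suffix_at S i) (suffix_at S p) \<le> max_lcp Rank L i"
proof -
  have "Rank p \<noteq> Rank i" using SA_Rank assms by metis
  then consider "Rank p < Rank i" | "Rank i < Rank p" by linarith
  then show ?thesis
  proof cases
    case 1
    then show ?thesis
      using lcp_suffixes_le_LCP(1)[of "Rank p" "Rank i"] Rank_in_range SA_Rank assms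
      by (auto simp: max_lcp_def lcp_commute)
  next
    case 2
    then show ?thesis
      using lcp_suffixes_le_LCP(2)[of "Rank i" "Rank p"] Rank_in_range SA_Rank assms
      by (auto simp: max_lcp_def)
  qed
qed

lemma max_lcp_attained:
  assumes i: "i \<in> {1..length S}" and pos: "0 < max_lcp Rank L i"
  obtains p where "p \<in> {1..length S}" "p \<noteq> i" "lcp (suffix_at S i) (suffix_at S p) = max_lcp Rank L i"
proof -
  have r: "Rank i \<in> {1..length S}" "SA (Rank i) = i" using Rank_in_range SA_Rank i by auto
  have neighbour: "SA r \<in> {1..length S}" "SA r \<noteq> i" if "r \<in> {1..length S}" "r \<noteq> Rank i" for r
    using SA_in_range inj_onD[OF inj_on_SA] that r by metis+
  consider "max_lcp Rank L i = L (Rank i)" | "max_lcp Rank L i = L (Suc (Rank i))"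
    unfolding max_lcp_def by linarith
  then show ?thesis
  proof cases
    case 1
    then have r2: "Rank i \<in> {2..length S}" using pos LCP_boundary r by (cases "Rank i = 1") auto
    then have "Rank i - 1 \<in> {1..length S}" "Rank i - 1 \<noteq> Rank i" by auto
    then have "SA (Rank i - 1) \<in> {1..length S}" "SA (Rank i - 1) \<noteq> i" by (rule neighbour)+
    moreover have "lcp (suffix_at S i) (suffix_at S (SA (Rank i - 1))) = max_lcp Rank L i"
      using 1 LCP_eq[OF r2] r by (simp add: lcp_commute)
    ultimately show ?thesis by (rule that)
  next
    case 2
    then have r2: "Suc (Rank i) \<in> {2..length S}"
      using pos LCP_boundary r by (cases "Rank i = length S") auto
    then have "Suc (Rank i) \<in> {1..length S}" "Suc (Rank i) \<noteq> Rank i" by auto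
    then have "SA (Suc (Rank i)) \<in> {1..length S}" "SA (Suc (Rank i)) \<noteq> i" by (rule neighbour)+
    moreover have "lcp (suffix_at S i) (suffix_at S (SA (Suc (Rank i)))) = max_lcp Rank L i"
      using 2 LCP_eq[OF r2] r by simp
    ultimately show ?thesis by (rule that)
  qed
qed

lemma max_lcp_bound:
  assumes i: "i \<in> {1..length S}"
  shows "i + max_lcp Rank L i \<le> Suc (length S)"
proof -
  have r: "Rank i \<in> {1..length S}" "SA (Rank i) = i" using Rank_in_range SA_Rank i by auto
  have "lcp u (suffix_at S i) \<le> length S - (i - 1)" "lcp (suffix_at S i) u \<le> length S - (i - 1)" for u
    using lcp_le_length length_suffix_at by metis+
  then have "L (Rank i) \<le> length S - (i - 1)" "L (Suc (Rank i)) \<le> length S - (i - 1)"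
    using LCP_eq[of "Rank i"] LCP_eq[of "Suc (Rank i)"] LCP_boundary r
    by (cases "Rank i = 1"; cases "Rank i = length S"; simp)+
  then show ?thesis using i by (auto simp: max_lcp_def)
qed

lemma occurs_at_iff_le_lcp:
  assumes "1 \<le> i" "i \<le> j" "j \<le> length S" "1 \<le> p"
  shows "occurs_at S (substr S i j) p \<longleftrightarrow> Suc j - i \<le> lcp (suffix_at S i) (suffix_at S p)"
proof -
  let ?m = "Suc j - i"
  have w: "substr S i j = take ?m (suffix_at S i)" "length (substr S i j) = ?m"
    using assms by (simp_all add: substr_def suffix_at_def)
  have "?m \<le> length (suffix_at S i)" using assms by (simp add: suffix_at_def)
  moreover have "p + ?m \<le> Suc (length S) \<longleftrightarrow> ?m \<le> length (suffix_at S p)"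
    using assms by (auto simp: suffix_at_def)
  moreover have "take ?m (drop (p - 1) S) = take ?m (suffix_at S p)" by (simp add: suffix_at_def)
  ultimately show ?thesis
    unfolding occurs_at_def le_lcp_iff w(2) unfolding w(1) using assms by auto
qed

lemma is_repeat_iff_max_lcp:
  "is_repeat S i j \<longleftrightarrow> 1 \<le> i \<and> i \<le> j \<and> j \<le> length S \<and> Suc j - i \<le> max_lcp Rank L i"
proof
  assume "is_repeat S i j"
  then obtain p where p: "p \<noteq> i" "occurs_at S (substr S i j) p"
    and ij: "1 \<le> i" "i \<le> j" "j \<le> length S"
    unfolding is_repeat_def by blast
  have "length (substr S i j) = Suc j - i" using ij by (simp add: substr_def)
  then have p_range: "p \<in> {1..length S}" using p(2) ij unfolding occurs_at_def by auto
  then have "Suc j - i \<le> lcp (suffix_at S i) (suffix_at S p)"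
    using occurs_at_iff_le_lcp[of i j p] ij p(2) by simp
  also have "\<dots> \<le> max_lcp Rank L i" using lcp_le_max_lcp[of i p] ij p_range p(1) by simp
  finally show "1 \<le> i \<and> i \<le> j \<and> j \<le> length S \<and> Suc j - i \<le> max_lcp Rank L i"
    using ij by simp
next
  assume ij: "1 \<le> i \<and> i \<le> j \<and> j \<le> length S \<and> Suc j - i \<le> max_lcp Rank L i"
  then obtain p where p: "p \<in> {1..length S}" "p \<noteq> i"
    "lcp (suffix_at S i) (suffix_at S p) = max_lcp Rank L i"
    using max_lcp_attained[of i] by force
  then have "occurs_at S (substr S i j) p" using occurs_at_iff_le_lcp[of i j p] ij by simp
  then show "is_repeat S i j" using p(2) ij unfolding is_repeat_def by blast
qed

end

fun lr_scan :: "(nat \<Rightarrow> nat) \<Rightarrow> nat \<Rightarrow> nat \<Rightarrow> nat \<times> nat" where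
  "lr_scan M y 0 = (0, 0)"
| "lr_scan M y (Suc k) =
     (if y < Suc k + M (Suc k) \<and> fst (lr_scan M y k) < M (Suc k)
      then (M (Suc k), Suc k) else lr_scan M y k)"

lemma lr_scan_maximal:
  "1 \<le> i \<Longrightarrow> i \<le> k \<Longrightarrow> y < i + M i \<Longrightarrow> M i \<le> fst (lr_scan M y k)"
  by (induction k) (auto simp: le_Suc_eq)

lemma lr_scan_attained:
  assumes "0 < fst (lr_scan M y k)"
  shows "1 \<le> snd (lr_scan M y k) \<and> snd (lr_scan M y k) \<le> k \<and>
    y < snd (lr_scan M y k) + M (snd (lr_scan M y k)) \<and> M (snd (lr_scan M y k)) = fst (lr_scan M y k)"
  using assms by (induction k) auto

lemma lr_scan_leftmost:
  "1 \<le> i \<Longrightarrow> i < snd (lr_scan M y k) \<Longrightarrow> y < i + M i \<Longrightarrow> M i < fst (lr_scan M y k)"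
proof (induction k)
  case (Suc k)
  then show ?case using lr_scan_maximal[of i k y M] lr_scan_attained[of M y k]
    by (auto split: if_splits)
qed simp

lemma lr_scan_fst_0: "fst (lr_scan M y k) = 0 \<Longrightarrow> lr_scan M y k = (0, 0)"
  by (induction k) auto

lemma lr_scan_bounded:
  assumes "\<And>i. 1 \<le> i \<Longrightarrow> i \<le> k \<Longrightarrow> i + M i \<le> Suc n"
  shows "snd (lr_scan M y k) + fst (lr_scan M y k) \<le> Suc n" "snd (lr_scan M y k) \<le> k"
    "fst (lr_scan M y k) \<noteq> 0 \<Longrightarrow> 1 \<le> snd (lr_scan M y k)"
  using assms lr_scan_attained[of M y k] lr_scan_fst_0[of M y k] by (cases "fst (lr_scan M y k) = 0"; force)+

definition lr_result :: "nat \<times> nat \<Rightarrow> (nat \<times> nat) option" where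
  "lr_result b = (if fst b = 0 then None else Some (snd b, snd b + fst b - 1))"

lemma correct_answer_lr_scan:
  assumes repeat_iff: "\<And>i j. is_repeat S i j \<longleftrightarrow> 1 \<le> i \<and> i \<le> j \<and> j \<le> length S \<and> Suc j - i \<le> M i"
    and bound: "\<And>i. 1 \<le> i \<Longrightarrow> i \<le> length S \<Longrightarrow> i + M i \<le> Suc (length S)"
    and xy: "1 \<le> x" "x \<le> y" "y \<le> length S"
  shows "correct_answer S x y (lr_result (lr_scan M y x))"
proof -
  obtain l b where lb: "lr_scan M y x = (l, b)" by fastforce
  have covering: "1 \<le> i \<and> i \<le> x \<and> y < i + M i \<and> j - i < M i"
    if "is_repeat S i j" "covers i j x y" for i j
    using that repeat_iff[of i j] unfolding covers_def by auto
  have maximal: "M i \<le> l" if "1 \<le> i" "i \<le> x" "y < i + M i" for i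
    using lr_scan_maximal[of i x y M] that lb by simp
  show ?thesis
  proof (cases "l = 0")
    case True
    have "\<not> is_LR S x y i j" for i j
      using covering[of i j] maximal[of i] True unfolding is_LR_def by fastforce
    then show ?thesis using True lb by (simp add: correct_answer_def lr_result_def)
  next
    case False
    then have b: "1 \<le> b" "b \<le> x" "y < b + l" "M b = l"
      using lr_scan_attained[of M y x] lb by auto
    have "is_repeat S b (b + l - 1)"
      using repeat_iff b bound[of b] xy False by auto
    moreover have "covers b (b + l - 1) x y" using b xy unfolding covers_def by auto
    moreover have "j - i \<le> b + l - 1 - b" if "is_repeat S i j" "covers i j x y" for i j
      using covering[OF that] maximal[of i] by fastforce
    ultimately have LR: "is_LR S x y b (b + l - 1)" unfolding is_LR_def by blast
    have "b \<le> i" if "is_LR S x y i j" for i j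
    proof (rule ccontr)
      assume "\<not> b \<le> i"
      have "is_repeat S i j" "covers i j x y" using that unfolding is_LR_def by auto
      moreover have "b + l - 1 - b \<le> j - i" using that LR unfolding is_LR_def by blast
      ultimately show False
        using covering lr_scan_leftmost[of i M y x] lb \<open>\<not> b \<le> i\<close> by fastforce
    qed
    then show ?thesis using LR False lb
      by (simp add: correct_answer_def lr_result_def is_leftmost_LR_def)
  qed
qed

lemma run_Fault [simp]: "run P E t Fault = Fault"
  by (cases t) auto

lemma run_Done [simp]: "run P E t (Done c) = Done c"
  by (cases t) auto

lemma run_numeral [simp]: "run P E (numeral w) (Running c) = run P E (pred_numeral w) (step P E c)"
  by (simp add: numeral_eq_Suc)

lemma run_add: "run P E (a + b) s = run P E b (run P E a s)"
  by (induction a arbitrary: s) (auto split: status.split)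

lemma run_Done_mono: "run P E t s = Done c \<Longrightarrow> t \<le> t' \<Longrightarrow> run P E t' s = Done c"
  using run_add[of P E t "t' - t" s] by simp

text \<open>
  Registers: R1 = x, R2 = y, R3 = the scanned position i, (R4, R5) = the current
  lr_scan pair (length, start), R6 = 1, R12 = 0.  The update of (R4, R5) is branch-free:
  R11 is the 0/1 value of the test y < i + m \<and> R4 < m, and R4 := R4 + R11 * (m - R4),
  R5 := (1 - R11) * R5 + R11 * i.
\<close>

definition lr_prog :: "instr list" where
"lr_prog = [LoadConst 6 1, LoadConst 3 1,
 Arith Less 7 1 3, JumpIfZero 7 5, Jump 24,
 ReadRank 8 3, ReadLCP 9 8, Arith Plus 10 8 6, ReadLCP 10 10,
 Arith Minus 10 10 9, Arith Plus 9 9 10, Arith Plus 11 3 9, Arith Less 11 2 11,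
 Arith Less 13 4 9, Arith Times 11 11 13, Arith Minus 13 9 4, Arith Times 13 11 13,
 Arith Plus 4 4 13, Arith Minus 13 6 11, Arith Times 13 13 5, Arith Times 14 11 3,
 Arith Plus 5 13 14, Arith Plus 3 3 6, Jump 2,
 JumpIfZero 4 29, Arith Plus 0 5 12, Arith Plus 1 5 4, Arith Minus 1 1 6, Halt,
 LoadConst 0 0, Halt]"

definition at_loop_head :: "nat \<Rightarrow> nat \<Rightarrow> cfg \<Rightarrow> nat \<Rightarrow> bool" where
  "at_loop_head x y c i \<longleftrightarrow> pc c = 2 \<and> regs c 1 = x \<and> regs c 2 = y \<and> regs c 3 = i \<and>
     regs c 6 = 1 \<and> regs c 12 = 0 \<and> space c = 0"

lemma lr_prog_init:
  assumes "1 < wbound E"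
  obtains c where "run lr_prog E 2 (Running (init_cfg n x y)) = Running c"
    "at_loop_head x y c 1" "(regs c 4, regs c 5) = lr_scan M y 0"
  using assms that by (simp add: step_def lr_prog_def setreg_def init_cfg_def at_loop_head_def)

lemma lr_prog_loop_body:
  assumes c: "at_loop_head x y c i" and i: "1 \<le> i" "i \<le> x" "x \<le> len E"
    and r: "rankArr E i = r" "1 \<le> r" "r \<le> len E"
    and ab: "lcpArr E r = a" "lcpArr E (Suc r) = b" "i + max a b \<le> Suc (len E)"
    and best: "regs c 4 \<le> len E" "regs c 5 \<le> len E"
    and W: "Suc (Suc (len E)) < wbound E"
  shows "\<exists>c'. run lr_prog E 21 (Running c) = Running c' \<and> at_loop_head x y c' (Suc i) \<and>
    (regs c' 4, regs c' 5) =
      (if y < i + max a b \<and> regs c 4 < max a b then (max a b, i) else (regs c 4, regs c 5))"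
proof -
  have "a \<le> len E" "b \<le> len E" using ab i by auto
  then have "a < wbound E" "b < wbound E" "b - a < wbound E" "a - regs c 4 < wbound E"
    "b - regs c 4 < wbound E" "i < wbound E" "Suc i < wbound E" "i + a < wbound E" "i + b < wbound E"
    "Suc r < wbound E" "r < wbound E" "regs c 4 < wbound E" "regs c 5 < wbound E"
    "a + (b - a) < wbound E" "i + (a + (b - a)) < wbound E"
    using i r ab best W by auto
  then show ?thesis
    using c i r ab best W unfolding at_loop_head_def
    by (simp add: step_def lr_prog_def setreg_def readarr_def max_def split: if_split_asm) auto
qed

lemma lr_prog_loop:
  fixes E defines "M \<equiv> max_lcp (rankArr E) (lcpArr E)"
  assumes c: "at_loop_head x y c 1" "(regs c 4, regs c 5) = lr_scan M y 0"
    and x: "x \<le> len E" and W: "Suc (Suc (len E)) < wbound E"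
    and rank: "\<And>i. 1 \<le> i \<Longrightarrow> i \<le> x \<Longrightarrow>
      1 \<le> rankArr E i \<and> rankArr E i \<le> len E \<and> i + M i \<le> Suc (len E)"
  shows "k \<le> x \<Longrightarrow> \<exists>c'. run lr_prog E (21 * k) (Running c) = Running c' \<and>
    at_loop_head x y c' (Suc k) \<and> (regs c' 4, regs c' 5) = lr_scan M y k"
proof (induction k)
  case (Suc k)
  then obtain c' where c': "run lr_prog E (21 * k) (Running c) = Running c'"
    "at_loop_head x y c' (Suc k)" "(regs c' 4, regs c' 5) = lr_scan M y k"
    by auto
  have "snd (lr_scan M y k) + fst (lr_scan M y k) \<le> Suc (len E)" "snd (lr_scan M y k) \<le> k"
    "fst (lr_scan M y k) \<noteq> 0 \<Longrightarrow> 1 \<le> snd (lr_scan M y k)"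
    using lr_scan_bounded[of k M "len E" y] rank Suc.prems by auto
  then have "regs c' 4 \<le> len E" "regs c' 5 \<le> len E"
    using c'(3) Suc.prems x by (fastforce simp: prod_eq_iff)+
  then obtain c'' where c'': "run lr_prog E 21 (Running c') = Running c''"
    "at_loop_head x y c'' (Suc (Suc k))"
    "(regs c'' 4, regs c'' 5) = (if y < Suc k + M (Suc k) \<and> regs c' 4 < M (Suc k)
       then (M (Suc k), Suc k) else (regs c' 4, regs c' 5))"
    using lr_prog_loop_body[OF c'(2) _ _ x refl, of "lcpArr E (rankArr E (Suc k))"]
      rank[of "Suc k"] Suc.prems W
    by (auto simp: M_def max_lcp_def)
  have "run lr_prog E (21 * k + 21) (Running c) = Running c''"
    unfolding run_add c'(1) by (rule c''(1))
  then have "run lr_prog E (21 * Suc k) (Running c) = Running c''"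
    by (simp only: mult_Suc_right add.commute)
  moreover have "(regs c'' 4, regs c'' 5) = lr_scan M y (Suc k)"
    using c''(3) c'(3) by (auto simp: prod_eq_iff)
  ultimately show ?case using c''(2) by blast
qed (use c in simp)

lemma lr_prog_exit:
  assumes "at_loop_head x y c (Suc x)" "(regs c 4, regs c 5) = b"
    and "snd b + fst b \<le> Suc n" "fst b \<noteq> 0 \<Longrightarrow> 1 \<le> snd b" "Suc (Suc n) < wbound E"
  shows "\<exists>cf. run lr_prog E 8 (Running c) = Done cf \<and> space cf = 0 \<and> result_of cf = lr_result b"
proof -
  have "regs c 5 + regs c 4 < wbound E" "1 < wbound E" using assms by auto
  then show ?thesis
    using assms unfolding at_loop_head_def
    by (cases b; cases "fst b = 0") (auto simp: step_def lr_prog_def setreg_def result_of_def lr_result_def)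
qed

lemma lr_prog_computes_lr_scan:
  fixes E defines "M \<equiv> max_lcp (rankArr E) (lcpArr E)"
  assumes x: "1 \<le> x" "x \<le> len E" and W: "Suc (Suc (len E)) < wbound E"
    and rank: "\<And>i. 1 \<le> i \<Longrightarrow> i \<le> x \<Longrightarrow>
      1 \<le> rankArr E i \<and> rankArr E i \<le> len E \<and> i + M i \<le> Suc (len E)"
  shows "\<exists>cf. run lr_prog E (32 * x) (Running (init_cfg n x y)) = Done cf \<and> space cf = 0 \<and>
    result_of cf = lr_result (lr_scan M y x)"
proof -
  obtain c where c: "run lr_prog E 2 (Running (init_cfg n x y)) = Running c"
    "at_loop_head x y c 1" "(regs c 4, regs c 5) = lr_scan M y 0"
    by (rule lr_prog_init[of E n x y M]) (use W in auto)
  obtain c' where c': "run lr_prog E (21 * x) (Running c) = Running c'"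
    "at_loop_head x y c' (Suc x)" "(regs c' 4, regs c' 5) = lr_scan M y x"
    using lr_prog_loop[of x y c E x] c(2,3) x(2) W rank unfolding M_def by blast
  obtain cf where cf: "run lr_prog E 8 (Running c') = Done cf" "space cf = 0"
    "result_of cf = lr_result (lr_scan M y x)"
  proof -
    have "snd (lr_scan M y x) + fst (lr_scan M y x) \<le> Suc (len E)"
      "fst (lr_scan M y x) \<noteq> 0 \<Longrightarrow> 1 \<le> snd (lr_scan M y x)"
      using lr_scan_bounded[of x M "len E" y] rank by auto
    then show ?thesis using that lr_prog_exit[OF c'(2,3), of "len E" E] W by blast
  qed
  have "run lr_prog E (2 + 21 * x + 8) (Running (init_cfg n x y)) = Done cf"
    unfolding run_add c(1) c'(1) by (rule cf(1))
  then have "run lr_prog E (32 * x) (Running (init_cfg n x y)) = Done cf"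
    by (rule run_Done_mono) (use x(1) in simp)
  then show ?thesis using cf(2,3) by blast
qed

theorem lemma5:
  "\<exists>(P :: instr list) (c :: nat) (k :: nat).
     \<forall>(\<sigma> :: nat) (S :: nat list) (SA :: nat \<Rightarrow> nat) (Rank :: nat \<Rightarrow> nat) (L :: nat \<Rightarrow> nat) (x :: nat) (y :: nat).
       set S \<subseteq> {1..\<sigma>} \<and> is_SA S SA \<and> is_rank_array S SA Rank \<and> is_lcp_array S SA L \<and>
       1 \<le> x \<and> x \<le> y \<and> y \<le> length S \<longrightarrow>
       (\<exists>cf. run P (mk_env S \<sigma> k Rank L) (c * x) (Running (init_cfg (length S) x y)) = Done cf \<and>
             space cf \<le> c * length S \<and>
             correct_answer S x y (result_of cf))"
proof (rule exI[of _ lr_prog], rule exI[of _ 32], rule exI[of _ 1], intro allI impI)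
  fix \<sigma> S SA Rank L x y
  assume h: "set S \<subseteq> {1..\<sigma>} \<and> is_SA S SA \<and> is_rank_array S SA Rank \<and> is_lcp_array S SA L \<and>
    1 \<le> x \<and> x \<le> y \<and> y \<le> length S"
  interpret suffix_array_data S SA Rank L
    by (rule suffix_array_data.intro) (use h in auto)
  define E where "E = mk_env S \<sigma> 1 Rank L"
  have E: "len E = length S" "rankArr E = Rank" "lcpArr E = L"
    by (simp_all add: E_def mk_env_def)
  have "S \<noteq> []" using h by auto
  then have "hd S \<in> {1..\<sigma>}" using h hd_in_set by blast
  then have "Suc (Suc (len E)) < wbound E" by (simp add: E_def mk_env_def)
  moreover have "1 \<le> rankArr E i \<and> rankArr E i \<le> len E \<and>
      i + max_lcp (rankArr E) (lcpArr E) i \<le> Suc (len E)" if "1 \<le> i" "i \<le> x" for i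
    using Rank_in_range[of i] max_lcp_bound[of i] that h unfolding E by simp
  ultimately obtain cf where cf: "run lr_prog E (32 * x) (Running (init_cfg (length S) x y)) = Done cf"
    "space cf = 0" "result_of cf = lr_result (lr_scan (max_lcp Rank L) y x)"
    using lr_prog_computes_lr_scan[of x E "length S" y] h unfolding E by auto
  have "correct_answer S x y (result_of cf)"
    unfolding cf(3)
  proof (rule correct_answer_lr_scan[OF is_repeat_iff_max_lcp])
    show "i + max_lcp Rank L i \<le> Suc (length S)" if "1 \<le> i" "i \<le> length S" for i
      using max_lcp_bound that by simp
  qed (use h in simp_all)
  then show "\<exists>cf. run lr_prog (mk_env S \<sigma> 1 Rank L) (32 * x) (Running (init_cfg (length S) x y)) = Done cf \<and>
      space cf \<le> 32 * length S \<and> correct_answer S x y (result_of cf)"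
    using cf(1,2) unfolding E_def by (intro exI[of _ cf]) simp
qed

end
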